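(* Let $m,k\in\mathbb{N}$, let $\alpha,\beta,\mu\in\mathbb{C}$ with $\alpha,1+\alpha+\beta+k\notin\mathbb{Z}_0^-$, $\Re(\beta)>0$ and $\Re(\mu)>0$. Then \[ \int_0^\infty t^{\beta-1}e^{-\mu t}\,{}_2F_2\left[\begin{array}{r} -m,\ \alpha;\\ -m-k,\ 1+\alpha+\beta+k;\end{array}\mu t\right]_m dt=\frac{\Gamma(\beta)}{\mu^{\beta}}\frac{\left(1+\alpha+k\right)_m\left(1+\beta+k\right)_m}{\left(1+k\right)_m\left(1+\alpha+\beta+k\right)_m}. \]
   Context: $\mathbb{N}=\{1,2,3,\dots\}$, $\mathbb{Z}_0^-=\{0,-1,-2,\dots\}$. For $a\in\mathbb{C}$ and $n\in\mathbb{N}_0$, $(a)_0=1$ and $(a)_n=a(a+1)\cdots(a+n-1)$. For $N\in\mathbb{N}_0$, the truncated series is ${}_2F_2\left[\begin{array}{r} a_1,a_2;\\ b_1,b_2;\end{array}z\right]_N=\sum_{n=0}^{N}\frac{(a_1)_n(a_2)_n}{(b_1)_n(b_2)_n}\frac{z^n}{n!}$ (first $N+1$ terms). The left side is the Mellin transform $\int_0^\infty t^{s-1}f(t)\,dt$ at $s=\beta$; $\mu^{\beta}$ denotes the principal power. *)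

theory Defs
  imports "HOL-Analysis.Analysis"
begin

definition trunc_hyp_2F2 :: "complex \<Rightarrow> complex \<Rightarrow> complex \<Rightarrow> complex \<Rightarrow> nat \<Rightarrow> complex \<Rightarrow> complex" where
  "trunc_hyp_2F2 a1 a2 b1 b2 N z =
     (\<Sum>n\<le>N. (pochhammer a1 n * pochhammer a2 n) / (pochhammer b1 n * pochhammer b2 n)
               * z ^ n / fact n)"

end

theory Submission
  imports Defs "HOL-Complex_Analysis.Complex_Analysis"
begin

(* Expanding the truncated series and integrating termwise with
   int_0^oo t^(s-1) e^(-mu t) dt = Gamma(s) / mu^s turns the left-hand side into
   Gamma(beta) / mu^beta times the terminating series 3F2(-m, alpha, beta; -m-k, 1+alpha+beta+k; 1).
   The Gamma integral is classical for mu > 0 and extends to Re mu > 0 by analytic continuation,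
   the integral being holomorphic in mu as a locally uniform limit of integrals over compact
   intervals. The 3F2 is balanced, and its value is the Pfaff-Saalschuetz product: creative
   telescoping gives a first-order recurrence in m for the terminating sum. *)

definition saalschuetz_term :: "complex \<Rightarrow> complex \<Rightarrow> nat \<Rightarrow> nat \<Rightarrow> nat \<Rightarrow> complex" where
  "saalschuetz_term a b k n j =
     pochhammer (- of_nat n) j * pochhammer a j * pochhammer b j /
     (pochhammer (- of_nat n - of_nat k) j * pochhammer (1 + a + b + of_nat k) j * fact j)"

lemma saalschuetz_term_0 [simp]: "saalschuetz_term a b k n 0 = 1"
  by (simp add: saalschuetz_term_def)

lemma saalschuetz_term_Suc_self [simp]: "saalschuetz_term a b k n (Suc n) = 0"
  by (simp add: saalschuetz_term_def pochhammer_of_nat_eq_0_iff)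

lemma saalschuetz_term_Suc:
  "saalschuetz_term a b k n (Suc j) = saalschuetz_term a b k n j *
     ((a + of_nat j) * (b + of_nat j) / ((1 + a + b + of_nat k + of_nat j) * of_nat (Suc j))) *
     ((- of_nat n + of_nat j) / (- of_nat n - of_nat k + of_nat j))"
  by (simp add: saalschuetz_term_def pochhammer_Suc divide_inverse mult_ac)

lemma saalschuetz_term_Suc_Suc:
  "saalschuetz_term a b k (Suc n) (Suc j) = saalschuetz_term a b k n j *
     ((a + of_nat j) * (b + of_nat j) / ((1 + a + b + of_nat k + of_nat j) * of_nat (Suc j))) *
     (- of_nat (Suc n) / (- of_nat (Suc n) - of_nat k))"
proof -
  have "- of_nat (Suc n) + 1 = (- of_nat n :: complex)"
    and "- of_nat (Suc n) - of_nat k + 1 = (- of_nat n - of_nat k :: complex)"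
    by simp_all
  then show ?thesis
    unfolding saalschuetz_term_def pochhammer_rec[of "- of_nat (Suc n)"]
      pochhammer_rec[of "- of_nat (Suc n) - of_nat k"] pochhammer_Suc[of a] pochhammer_Suc[of b]
      pochhammer_Suc[of "1 + a + b + of_nat k"] fact_Suc
    by (simp add: divide_inverse mult_ac)
qed

(* Zeilberger's creative telescoping, with certificate t_n(j) (a+j) (b+j).
   The hypothesis k > 0 keeps the denominator j - n - k of t_n(j+1) / t_n(j) nonzero for j <= n. *)
lemma saalschuetz_term_telescoping:
  assumes "j \<le> n" and "0 < k" and c: "1 + a + b + of_nat k \<notin> \<int>\<^sub>\<le>\<^sub>0"
  shows "(1 + a + b + of_nat k + of_nat n) * (1 + of_nat k + of_nat n)
           * saalschuetz_term a b k (Suc n) (Suc j)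
         - (1 + a + of_nat k + of_nat n) * (1 + b + of_nat k + of_nat n)
           * saalschuetz_term a b k n (Suc j)
       = saalschuetz_term a b k n j * (a + of_nat j) * (b + of_nat j)
         - saalschuetz_term a b k n (Suc j) * (a + of_nat (Suc j)) * (b + of_nat (Suc j))"
    (is "?lhs = ?rhs")
proof -
  define x y z :: complex where "x = of_nat n" and "y = of_nat j" and "z = of_nat k"
  define R where
    "R = saalschuetz_term a b k n j * ((a + y) * (b + y) / ((1 + a + b + z + y) * (y + 1)))"
  define q1 where "q1 = (x + 1) / (x + 1 + z)"
  define q2 where "q2 = (y - x) / (y - x - z)"
  have "of_nat j \<noteq> (of_nat (n + k) :: complex)"
    using assms(1,2) by (simp only: of_nat_eq_iff)
  then have "y - x - z \<noteq> 0"
    by (simp add: x_def y_def z_def algebra_simps)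
  have "x + 1 + z \<noteq> 0"
    using of_nat_neq_0[of "n + k", where ?'a = complex] by (simp add: x_def z_def add_ac)
  have "y + 1 \<noteq> 0"
    using of_nat_neq_0[of j, where ?'a = complex] by (simp add: y_def add_ac)
  have "1 + a + b + z + y \<noteq> 0"
    using c plus_of_nat_eq_0_imp[of "1 + a + b + of_nat k" j] by (auto simp: y_def z_def)
  have "- of_nat (Suc n) / (- of_nat (Suc n) - of_nat k) = (- (x + 1)) / (- (x + 1 + z))"
    by (simp add: x_def z_def algebra_simps)
  then have Suc_Suc: "saalschuetz_term a b k (Suc n) (Suc j) = R * q1"
    unfolding saalschuetz_term_Suc_Suc R_def q1_def minus_divide_divide
    by (simp add: y_def z_def add_ac)
  have Suc: "saalschuetz_term a b k n (Suc j) = R * q2"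
    unfolding saalschuetz_term_Suc R_def q2_def by (simp add: x_def y_def z_def algebra_simps)
  have factor:
    "saalschuetz_term a b k n j * (a + y) * (b + y) = R * ((1 + a + b + z + y) * (y + 1))"
    unfolding R_def using \<open>y + 1 \<noteq> 0\<close> \<open>1 + a + b + z + y \<noteq> 0\<close> by simp
  have q1: "(1 + z + x) * q1 = x + 1"
    unfolding q1_def using \<open>x + 1 + z \<noteq> 0\<close> by (simp add: add_ac)
  have q2: "(1 + a + b + z + x) * (x + 1) - (1 + a + z + x) * (1 + b + z + x) * q2
      = (1 + a + b + z + y) * (y + 1) - q2 * ((a + y + 1) * (b + y + 1))"
    unfolding q2_def using \<open>y - x - z \<noteq> 0\<close> by (simp add: field_simps)
  have "?lhs = R * ((1 + a + b + z + x) * ((1 + z + x) * q1)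
                    - (1 + a + z + x) * (1 + b + z + x) * q2)"
    unfolding Suc_Suc Suc by (simp add: x_def z_def algebra_simps)
  also have "\<dots> = R * ((1 + a + b + z + y) * (y + 1) - q2 * ((a + y + 1) * (b + y + 1)))"
    unfolding q1 q2 ..
  also have "\<dots> = ?rhs"
    unfolding factor[unfolded y_def] Suc by (simp add: y_def algebra_simps)
  finally show ?thesis .
qed

lemma sum_saalschuetz_term:
  assumes "0 < k" and c: "1 + a + b + of_nat k \<notin> \<int>\<^sub>\<le>\<^sub>0"
  shows "(\<Sum>j\<le>n. saalschuetz_term a b k n j) =
           pochhammer (1 + a + of_nat k) n * pochhammer (1 + b + of_nat k) n /
           (pochhammer (1 + of_nat k) n * pochhammer (1 + a + b + of_nat k) n)"
proof (induction n)
  case 0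
  show ?case by simp
next
  case (Suc n)
  define A where "A = (1 + a + b + of_nat k + of_nat n) * (1 + of_nat k + of_nat n)"
  define B where "B = (1 + a + of_nat k + of_nat n) * (1 + b + of_nat k + of_nat n)"
  define g where "g j = saalschuetz_term a b k n j * (a + of_nat j) * (b + of_nat j)" for j
  have "A * (\<Sum>j\<le>Suc n. saalschuetz_term a b k (Suc n) j)
        - B * (\<Sum>j\<le>Suc n. saalschuetz_term a b k n j)
      = (\<Sum>j\<le>Suc n. A * saalschuetz_term a b k (Suc n) j - B * saalschuetz_term a b k n j)"
    by (simp only: sum_distrib_left sum_subtractf)
  also have "\<dots> = (A - B) + (\<Sum>j\<le>n. A * saalschuetz_term a b k (Suc n) (Suc j)
                                     - B * saalschuetz_term a b k n (Suc j))"
    by (simp only: sum.atMost_Suc_shift) simp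
  also have "\<dots> = (A - B) + (\<Sum>j\<le>n. g j - g (Suc j))"
    using saalschuetz_term_telescoping[OF _ assms] by (simp add: A_def B_def g_def)
  also have "\<dots> = 0"
    unfolding sum_telescope by (simp add: A_def B_def g_def algebra_simps)
  finally have "A * (\<Sum>j\<le>Suc n. saalschuetz_term a b k (Suc n) j)
      = B * (\<Sum>j\<le>n. saalschuetz_term a b k n j)"
    by simp
  moreover have "A \<noteq> 0"
    using c plus_of_nat_eq_0_imp[of "1 + a + b + of_nat k" n]
      of_nat_neq_0[of "k + n", where ?'a = complex]
    by (auto simp: A_def add_ac)
  ultimately have "(\<Sum>j\<le>Suc n. saalschuetz_term a b k (Suc n) j)
      = B / A * (\<Sum>j\<le>n. saalschuetz_term a b k n j)"
    by (simp add: field_simps)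
  also note Suc.IH
  also have "B / A * (pochhammer (1 + a + of_nat k) n * pochhammer (1 + b + of_nat k) n /
      (pochhammer (1 + of_nat k) n * pochhammer (1 + a + b + of_nat k) n)) =
      pochhammer (1 + a + of_nat k) (Suc n) * pochhammer (1 + b + of_nat k) (Suc n) /
      (pochhammer (1 + of_nat k) (Suc n) * pochhammer (1 + a + b + of_nat k) (Suc n))"
    by (simp add: A_def B_def pochhammer_Suc divide_inverse mult_ac)
  finally show ?case .
qed

lemma has_integral_rescale_Ioi:
  fixes f :: "real \<Rightarrow> 'a::euclidean_space"
  assumes f: "f absolutely_integrable_on {0<..}" and "c > 0"
  shows "((\<lambda>x. f (c * x)) has_integral integral {0<..} f /\<^sub>R c) {0<..}"
proof -
  have "has_bochner_integral lebesgue (\<lambda>x. indicator {0<..} x *\<^sub>R f x) (integral {0<..} f)"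
    using f set_lebesgue_integral_eq_integral(2)[OF f]
    by (simp add: has_bochner_integral_iff set_integrable_def set_lebesgue_integral_def)
  then have "has_bochner_integral lebesgue (\<lambda>x. indicator {0<..} (c * x) *\<^sub>R f (c * x))
      (integral {0<..} f /\<^sub>R c)"
    using has_bochner_integral_lebesgue_real_affine_iff[of c "\<lambda>x. indicator {0<..} x *\<^sub>R f x" _ 0]
      \<open>c > 0\<close>
    by simp
  moreover have "indicator {0<..} (c * x) = (indicator {0<..} x :: real)" for x
    using \<open>c > 0\<close> by (simp add: indicator_def zero_less_mult_iff)
  ultimately have bochner: "has_bochner_integral lebesgue (\<lambda>x. indicator {0<..} x *\<^sub>R f (c * x))
      (integral {0<..} f /\<^sub>R c)"
    by simp
  have "((\<lambda>x. indicator {0<..} x *\<^sub>R f (c * x)) has_integral integral {0<..} f /\<^sub>R c) UNIV"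
    using has_integral_integral_lebesgue[OF integrable.intros[OF bochner]]
    unfolding has_bochner_integral_integral_eq[OF bochner] .
  moreover have "(\<lambda>x. indicator {0<..} x *\<^sub>R f (c * x))
      = (\<lambda>x. if x \<in> {0<..} then f (c * x) else 0)"
    by (intro ext) (rule indicator_scaleR_eq_if)
  ultimately show ?thesis
    by (simp only: has_integral_restrict_UNIV)
qed

lemma uniform_limit_integral_exhausting:
  fixes f :: "'a \<Rightarrow> 'n::euclidean_space \<Rightarrow> 'b::euclidean_space" and h :: "'n \<Rightarrow> real"
  assumes subset: "\<And>n. I n \<subseteq> S"
    and exhausting: "\<And>t. t \<in> S \<Longrightarrow> eventually (\<lambda>n. t \<in> I n) sequentially"
    and h: "h integrable_on S" "\<And>n. h integrable_on I n"
    and f: "\<And>x. x \<in> K \<Longrightarrow> f x integrable_on S" "\<And>x n. x \<in> K \<Longrightarrow> f x integrable_on I n"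
    and bound: "\<And>x t. x \<in> K \<Longrightarrow> t \<in> S \<Longrightarrow> norm (f x t) \<le> h t"
  shows "uniform_limit K (\<lambda>n x. integral (I n) (f x)) (\<lambda>x. integral S (f x)) sequentially"
proof (cases "K = {}")
  case False
  then obtain x0 where "x0 \<in> K" by blast
  have h_nonneg: "0 \<le> h t" if "t \<in> S" for t
    using order_trans[OF norm_ge_zero bound[OF \<open>x0 \<in> K\<close> that]] .
  define tail where "tail n t = (if t \<in> I n then 0 else h t)" for n t
  have tail_integrable: "tail n integrable_on S" for n
  proof -
    have "(\<lambda>t. if t \<in> I n then h t else 0) integrable_on S"
      using h(2) has_integral_restrict[OF subset] unfolding integrable_on_def by blast
    from integrable_diff[OF h(1) this] show ?thesis
      by (rule integrable_eq) (simp add: tail_def)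
  qed
  have "(\<lambda>n. integral S (tail n)) \<longlonglongrightarrow> integral S (\<lambda>_. 0)"
  proof (rule dominated_convergence(2)[OF tail_integrable h(1)])
    show "norm (tail n t) \<le> h t" if "t \<in> S" for n t
      using h_nonneg[OF that] by (simp add: tail_def)
    show "(\<lambda>n. tail n t) \<longlonglongrightarrow> 0" if "t \<in> S" for t
      by (rule tendsto_eventually, rule eventually_mono[OF exhausting[OF that]]) (simp add: tail_def)
  qed
  then have tail_lim: "(\<lambda>n. integral S (tail n)) \<longlonglongrightarrow> 0"
    by simp
  have dist_le: "dist (integral (I n) (f x)) (integral S (f x)) \<le> integral S (tail n)"
    if "x \<in> K" for x n
  proof -
    have "((\<lambda>t. if t \<in> I n then f x t else 0) has_integral integral (I n) (f x)) S"
      unfolding has_integral_restrict[OF subset] using f(2)[OF that] by (rule integrable_integral)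
    with f(1)[OF that] have diff: "((\<lambda>t. f x t - (if t \<in> I n then f x t else 0)) has_integral
        integral S (f x) - integral (I n) (f x)) S"
      by (intro has_integral_diff integrable_integral)
    have "norm (integral S (\<lambda>t. f x t - (if t \<in> I n then f x t else 0))) \<le> integral S (tail n)"
      using bound[OF \<open>x \<in> K\<close>]
      by (intro integral_norm_bound_integral has_integral_integrable[OF diff] tail_integrable)
        (simp add: tail_def)
    then show ?thesis
      by (simp add: integral_unique[OF diff] dist_norm norm_minus_commute)
  qed
  show ?thesis
  proof (rule uniform_limitI)
    fix e :: real
    assume "e > 0"
    with tail_lim have "eventually (\<lambda>n. integral S (tail n) < e) sequentially"
      by (rule order_tendstoD)
    then show "\<forall>\<^sub>F n in sequentially. \<forall>x\<in>K. dist (integral (I n) (f x)) (integral S (f x)) < e"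
      by eventually_elim (auto intro: order_le_less_trans[OF dist_le])
  qed
qed simp

definition gamma_kernel :: "complex \<Rightarrow> complex \<Rightarrow> real \<Rightarrow> complex" where
  "gamma_kernel s \<mu> t = of_real t powr (s - 1) * exp (- \<mu> * of_real t)"

lemma norm_gamma_kernel:
  "t > 0 \<Longrightarrow> norm (gamma_kernel s \<mu> t) = t powr (Re s - 1) * exp (- Re \<mu> * t)"
  by (simp add: gamma_kernel_def norm_mult norm_powr_real_powr)

lemma continuous_on_gamma_kernel: "continuous_on {0<..} (gamma_kernel s \<mu>)"
  unfolding gamma_kernel_def by (intro continuous_intros) (auto simp: complex_nonpos_Reals_iff)

lemma integrable_powr_mult_exp:
  fixes a b :: real
  assumes "b > -1" and "a > 0"
  shows "(\<lambda>t. t powr b * exp (- a * t)) integrable_on {0<..}"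
proof -
  let ?g = "\<lambda>t. complex_of_real t powr (of_real (b + 1) - 1) / of_real (exp (a * t))"
  have "?g absolutely_integrable_on {0<..}"
    using assms by (intro absolutely_integrable_Gamma_integral) auto
  then have "(\<lambda>t. norm (?g t)) integrable_on {0<..}"
    by (simp add: absolutely_integrable_on_def)
  then show ?thesis
    by (rule integrable_spike_finite[of "{}", rotated 2])
      (auto simp: norm_divide norm_powr_real_powr exp_minus field_simps)
qed

lemma gamma_kernel_absolutely_integrable:
  assumes "Re s > 0" and "Re \<mu> > 0"
  shows "gamma_kernel s \<mu> absolutely_integrable_on {0<..}"
proof (rule measurable_bounded_by_integrable_imp_absolutely_integrable)
  show "gamma_kernel s \<mu> \<in> borel_measurable (lebesgue_on {0<..})"
    by (rule continuous_imp_measurable_on_sets_lebesgue[OF continuous_on_gamma_kernel]) auto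
  show "(\<lambda>t. t powr (Re s - 1) * exp (- Re \<mu> * t)) integrable_on {0<..}"
    using assms by (intro integrable_powr_mult_exp) auto
qed (auto simp: norm_gamma_kernel)

lemma has_integral_gamma_kernel_of_real:
  assumes "Re s > 0" and "a > 0"
  shows "(gamma_kernel s (of_real a) has_integral Gamma s / of_real a powr s) {0<..}"
proof -
  define g where "g t = of_real t powr (s - 1) / of_real (exp t)" for t
  have "(g has_integral Gamma s) {0<..}"
    unfolding g_def by (rule Gamma_integral_complex'[OF assms(1)])
  moreover have "g absolutely_integrable_on {0<..}"
    unfolding g_def by (rule absolutely_integrable_Gamma_integral'[OF assms(1)])
  ultimately have rescaled: "((\<lambda>t. g (a * t)) has_integral Gamma s /\<^sub>R a) {0<..}"
    using has_integral_rescale_Ioi[OF _ assms(2)] integral_unique by metis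
  define c where "c = of_real a powr (s - 1)"
  have "c \<noteq> 0"
    using assms(2) by (simp add: c_def)
  have g_eq: "g (a * t) = c * gamma_kernel s (of_real a) t" if "t > 0" for t
    using that assms(2)
    by (simp add: c_def g_def gamma_kernel_def powr_times_real exp_minus exp_of_real[symmetric]
        field_simps)
  have value_eq: "Gamma s /\<^sub>R a = c * (Gamma s / of_real a powr s)"
    using assms(2) by (simp add: c_def powr_diff scaleR_conv_of_real field_simps)
  have "((\<lambda>t. c * gamma_kernel s (of_real a) t) has_integral c * (Gamma s / of_real a powr s)) {0<..}"
    using rescaled g_eq
      has_integral_cong[of "{0<..}" "\<lambda>t. g (a * t)" "\<lambda>t. c * gamma_kernel s (of_real a) t"]
    unfolding value_eq by simp
  then have "((\<lambda>t. inverse c * (c * gamma_kernel s (of_real a) t)) has_integral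
      inverse c * (c * (Gamma s / of_real a powr s))) {0<..}"
    by (rule has_integral_mult_right)
  then show ?thesis
    using \<open>c \<noteq> 0\<close> by (simp flip: mult.assoc)
qed

lemma holomorphic_on_integral_gamma_kernel_Icc:
  assumes "0 < a"
  shows "(\<lambda>\<mu>. integral {a..b} (gamma_kernel s \<mu>)) holomorphic_on UNIV"
  unfolding cbox_interval[symmetric]
proof (rule leibniz_rule_holomorphic[where fx = "\<lambda>\<mu> t. - of_real t * gamma_kernel s \<mu> t"])
  show "((\<lambda>\<mu>. gamma_kernel s \<mu> t) has_field_derivative - of_real t * gamma_kernel s \<mu> t) (at \<mu> within UNIV)"
    for \<mu> t
    unfolding gamma_kernel_def by (auto intro!: derivative_eq_intros)
  show "gamma_kernel s \<mu> integrable_on cbox a b" for \<mu>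
    by (rule integrable_continuous, rule continuous_on_subset[OF continuous_on_gamma_kernel])
      (use assms in auto)
  show "continuous_on (UNIV \<times> cbox a b) (\<lambda>(\<mu>, t). - of_real t * gamma_kernel s \<mu> t)"
    unfolding gamma_kernel_def case_prod_unfold
    by (intro continuous_intros) (use assms in \<open>auto simp: complex_nonpos_Reals_iff\<close>)
qed auto

lemma eventually_mem_Icc_inverse_Suc:
  assumes "t > 0"
  shows "eventually (\<lambda>n. t \<in> {inverse (real (Suc n))..real (Suc n)}) sequentially"
proof -
  obtain N where N: "max t (inverse t) \<le> real N"
    using real_arch_simple by blast
  have "t \<in> {inverse (real (Suc n))..real (Suc n)}" if "n \<ge> N" for n
  proof -
    have "max t (inverse t) \<le> real (Suc n)"
      using N that by linarith
    with assms show ?thesis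
      by (auto simp: field_simps)
  qed
  then show ?thesis
    unfolding eventually_sequentially by blast
qed

(* The truncations to [1/(n+1), n+1] are entire (differentiation under the integral sign) and
   converge uniformly on each disc cball z (Re z / 2), where the integrand is dominated by
   t^(Re s - 1) e^(- Re z t / 2). *)
lemma holomorphic_on_integral_gamma_kernel:
  assumes "Re s > 0"
  shows "(\<lambda>\<mu>. integral {0<..} (gamma_kernel s \<mu>)) holomorphic_on {\<mu>. 0 < Re \<mu>}"
proof -
  define I where "I n = {inverse (real (Suc n))..real (Suc n)}" for n
  have "\<exists>r>0. (\<lambda>\<mu>. integral {0<..} (gamma_kernel s \<mu>)) holomorphic_on ball z r" if "0 < Re z" for z
  proof -
    define r where "r = Re z / 2"
    have "r > 0"
      using that by (simp add: r_def)
    have Re_ge: "r \<le> Re \<mu>" if "\<mu> \<in> cball z r" for \<mu>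
      using that abs_Re_le_cmod[of "z - \<mu>"] by (auto simp: r_def dist_norm)
    have ulim: "uniform_limit (cball z r) (\<lambda>n \<mu>. integral (I n) (gamma_kernel s \<mu>))
        (\<lambda>\<mu>. integral {0<..} (gamma_kernel s \<mu>)) sequentially"
    proof (rule uniform_limit_integral_exhausting[where h = "\<lambda>t. t powr (Re s - 1) * exp (- r * t)"])
      show "I n \<subseteq> {0<..}" for n
        by (auto simp: I_def intro: less_le_trans[of 0 "inverse (real (Suc n))"])
      show "eventually (\<lambda>n. t \<in> I n) sequentially" if "t \<in> {0<..}" for t
        using eventually_mem_Icc_inverse_Suc that by (simp add: I_def)
      show "(\<lambda>t. t powr (Re s - 1) * exp (- r * t)) integrable_on {0<..}"
        using assms \<open>r > 0\<close> by (intro integrable_powr_mult_exp) auto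
      show "(\<lambda>t. t powr (Re s - 1) * exp (- r * t)) integrable_on I n" for n
        unfolding I_def by (intro integrable_continuous_real continuous_intros) auto
      show "gamma_kernel s \<mu> integrable_on {0<..}" if "\<mu> \<in> cball z r" for \<mu>
        using Re_ge[OF that] \<open>r > 0\<close>
        by (intro set_lebesgue_integral_eq_integral(1) gamma_kernel_absolutely_integrable assms) auto
      show "gamma_kernel s \<mu> integrable_on I n" for \<mu> n
        unfolding I_def
        by (intro integrable_continuous_real continuous_on_subset[OF continuous_on_gamma_kernel])
          (auto intro: less_le_trans[of 0 "inverse (real (Suc n))"])
      show "norm (gamma_kernel s \<mu> t) \<le> t powr (Re s - 1) * exp (- r * t)"
        if "\<mu> \<in> cball z r" "t \<in> {0<..}" for \<mu> t
        using that Re_ge[OF that(1)] by (auto simp: norm_gamma_kernel intro!: mult_left_mono)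
    qed
    have "(\<lambda>\<mu>. integral (I n) (gamma_kernel s \<mu>)) holomorphic_on UNIV" for n
      unfolding I_def by (rule holomorphic_on_integral_gamma_kernel_Icc) simp
    then have cont: "\<forall>\<^sub>F n in sequentially.
        continuous_on (cball z r) (\<lambda>\<mu>. integral (I n) (gamma_kernel s \<mu>))
        \<and> (\<lambda>\<mu>. integral (I n) (gamma_kernel s \<mu>)) holomorphic_on ball z r"
      by (intro always_eventually allI conjI holomorphic_on_imp_continuous_on)
        (auto intro: holomorphic_on_subset[OF _ subset_UNIV])
    have "(\<lambda>\<mu>. integral {0<..} (gamma_kernel s \<mu>)) holomorphic_on ball z r"
      by (rule holomorphic_uniform_limit[OF cont ulim]) auto
    with \<open>r > 0\<close> show ?thesis
      by blast
  qed
  then have "(\<lambda>\<mu>. integral {0<..} (gamma_kernel s \<mu>)) analytic_on {\<mu>. 0 < Re \<mu>}"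
    by (auto simp: analytic_on_def)
  then show ?thesis
    by (rule analytic_imp_holomorphic)
qed

lemma one_islimpt_of_real_pos: "(1::complex) islimpt complex_of_real ` {0<..}"
proof -
  have "(\<lambda>n. complex_of_real (1 + inverse (real (Suc n)))) \<longlonglongrightarrow> of_real (1 + 0)"
    by (intro tendsto_of_real tendsto_add tendsto_const LIMSEQ_inverse_real_of_nat)
  moreover have "complex_of_real (1 + inverse (real (Suc n))) \<in> complex_of_real ` {0<..} - {1}" for n
  proof -
    have "1 + inverse (real (Suc n)) \<in> {0<..}" and "1 + inverse (real (Suc n)) \<noteq> 1"
      by (simp_all add: add_pos_pos)
    then show ?thesis
      by (metis DiffI imageI of_real_eq_1_iff singletonD)
  qed
  ultimately show ?thesis
    unfolding islimpt_sequential
    by (intro exI[of _ "\<lambda>n. complex_of_real (1 + inverse (real (Suc n)))"]) auto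
qed

lemma has_integral_gamma_kernel:
  assumes "Re s > 0" and "Re \<mu> > 0"
  shows "(gamma_kernel s \<mu> has_integral Gamma s / \<mu> powr s) {0<..}"
proof -
  let ?F = "\<lambda>\<mu>. integral {0<..} (gamma_kernel s \<mu>) - Gamma s / \<mu> powr s"
  have "?F holomorphic_on {\<mu>. 0 < Re \<mu>}"
    using holomorphic_on_integral_gamma_kernel[OF assms(1)]
    by (intro holomorphic_intros) (auto simp: complex_nonpos_Reals_iff)
  then have "?F \<mu> = 0"
  proof (rule analytic_continuation)
    show "open {\<mu>. 0 < Re \<mu>}" and "connected {\<mu>. 0 < Re \<mu>}"
      by (simp_all add: open_halfspace_Re_gt convex_connected convex_halfspace_Re_gt)
    show "complex_of_real ` {0<..} \<subseteq> {\<mu>. 0 < Re \<mu>}"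
      and "1 \<in> {\<mu>. 0 < Re \<mu>}" and "\<mu> \<in> {\<mu>. 0 < Re \<mu>}"
      using assms(2) by auto
    show "1 islimpt complex_of_real ` {0<..}"
      by (rule one_islimpt_of_real_pos)
    show "?F z = 0" if "z \<in> complex_of_real ` {0<..}" for z
      using that integral_unique[OF has_integral_gamma_kernel_of_real[OF assms(1)]] by auto
  qed
  moreover have "gamma_kernel s \<mu> integrable_on {0<..}"
    using gamma_kernel_absolutely_integrable[OF assms] by (rule set_lebesgue_integral_eq_integral(1))
  ultimately show ?thesis
    using integrable_integral by fastforce
qed

lemma gamma_kernel_mult_power:
  assumes "t > 0"
  shows "gamma_kernel s \<mu> t * (\<mu> * of_real t) ^ n = \<mu> ^ n * gamma_kernel (s + of_nat n) \<mu> t"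
proof -
  have "s + of_nat n - 1 = (s - 1) + of_nat n"
    by simp
  then have "of_real t powr (s + of_nat n - 1) = of_real t powr (s - 1) * of_real t ^ n"
    using assms by (simp only: powr_add powr_nat') simp
  then show ?thesis
    by (simp add: gamma_kernel_def power_mult_distrib)
qed

lemma has_integral_gamma_kernel_mult_polynomial:
  assumes "Re s > 0" and "Re \<mu> > 0"
  shows "((\<lambda>t. gamma_kernel s \<mu> t * (\<Sum>n\<le>N. c n * (\<mu> * of_real t) ^ n)) has_integral
           Gamma s / \<mu> powr s * (\<Sum>n\<le>N. c n * pochhammer s n)) {0<..}"
proof -
  have "\<mu> \<noteq> 0" and "s \<notin> \<int>\<^sub>\<le>\<^sub>0"
    using assms by (auto elim!: nonpos_Ints_cases)
  have "((\<lambda>t. c n * \<mu> ^ n * gamma_kernel (s + of_nat n) \<mu> t) has_integral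
      Gamma s / \<mu> powr s * (c n * pochhammer s n)) {0<..}" for n
  proof -
    have "c n * \<mu> ^ n * (Gamma (s + of_nat n) / \<mu> powr (s + of_nat n))
        = Gamma s / \<mu> powr s * (c n * pochhammer s n)"
      using \<open>\<mu> \<noteq> 0\<close> \<open>s \<notin> \<int>\<^sub>\<le>\<^sub>0\<close>
      by (simp add: pochhammer_Gamma powr_add Gamma_eq_zero_iff field_simps)
    moreover have "Re (s + of_nat n) > 0"
      using assms(1) by simp
    ultimately show ?thesis
      using has_integral_mult_right[OF has_integral_gamma_kernel[OF _ assms(2)],
          of "s + of_nat n" "c n * \<mu> ^ n"]
      by simp
  qed
  then have "((\<lambda>t. \<Sum>n\<le>N. c n * \<mu> ^ n * gamma_kernel (s + of_nat n) \<mu> t) has_integral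
      Gamma s / \<mu> powr s * (\<Sum>n\<le>N. c n * pochhammer s n)) {0<..}"
    unfolding sum_distrib_left by (intro has_integral_sum) auto
  moreover have "gamma_kernel s \<mu> t * (\<Sum>n\<le>N. c n * (\<mu> * of_real t) ^ n)
      = (\<Sum>n\<le>N. c n * \<mu> ^ n * gamma_kernel (s + of_nat n) \<mu> t)" if "t \<in> {0<..}" for t
    using gamma_kernel_mult_power[of t s \<mu>] that
    unfolding sum_distrib_left by (intro sum.cong) (simp_all add: mult.left_commute mult.assoc)
  ultimately show ?thesis
    using has_integral_cong by (metis (no_types, lifting))
qed

lemma has_integral_gamma_kernel_mult_trunc_hyp_2F2:
  assumes "Re s > 0" and "Re \<mu> > 0"
  shows "((\<lambda>t. gamma_kernel s \<mu> t * trunc_hyp_2F2 a1 a2 b1 b2 N (\<mu> * of_real t)) has_integral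
           Gamma s / \<mu> powr s * (\<Sum>n\<le>N. pochhammer a1 n * pochhammer a2 n * pochhammer s n /
             (pochhammer b1 n * pochhammer b2 n * fact n))) {0<..}"
proof -
  define c where
    "c n = pochhammer a1 n * pochhammer a2 n / (pochhammer b1 n * pochhammer b2 n) / fact n" for n
  have "trunc_hyp_2F2 a1 a2 b1 b2 N z = (\<Sum>n\<le>N. c n * z ^ n)" for z
    by (simp add: trunc_hyp_2F2_def c_def)
  moreover have "c n * pochhammer s n = pochhammer a1 n * pochhammer a2 n * pochhammer s n /
      (pochhammer b1 n * pochhammer b2 n * fact n)" for n
    by (simp add: c_def)
  ultimately show ?thesis
    using has_integral_gamma_kernel_mult_polynomial[OF assms, where N = N and c = c] by simp
qed

theorem mainTheorem19:
  fixes m k :: nat and \<alpha> \<beta> \<mu> :: complex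
  assumes "m \<ge> 1" and "k \<ge> 1"
    and "\<alpha> \<notin> \<int>\<^sub>\<le>\<^sub>0"
    and "1 + \<alpha> + \<beta> + of_nat k \<notin> \<int>\<^sub>\<le>\<^sub>0"
    and "Re \<beta> > 0" and "Re \<mu> > 0"
  shows "((\<lambda>t::real. (of_real t) powr (\<beta> - 1) * exp (- \<mu> * of_real t)
            * trunc_hyp_2F2 (- of_nat m) \<alpha> (- of_nat m - of_nat k) (1 + \<alpha> + \<beta> + of_nat k)
                m (\<mu> * of_real t))
         has_integral
           (Gamma \<beta> / \<mu> powr \<beta>
            * (pochhammer (1 + \<alpha> + of_nat k) m * pochhammer (1 + \<beta> + of_nat k) m)
            / (pochhammer (1 + of_nat k) m * pochhammer (1 + \<alpha> + \<beta> + of_nat k) m)))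
         {0<..}"
proof -
  have "((\<lambda>t. gamma_kernel \<beta> \<mu> t
              * trunc_hyp_2F2 (- of_nat m) \<alpha> (- of_nat m - of_nat k) (1 + \<alpha> + \<beta> + of_nat k)
                  m (\<mu> * of_real t))
         has_integral Gamma \<beta> / \<mu> powr \<beta> * (\<Sum>n\<le>m. saalschuetz_term \<alpha> \<beta> k m n)) {0<..}"
    using has_integral_gamma_kernel_mult_trunc_hyp_2F2[OF assms(5,6)] by (simp add: saalschuetz_term_def)
  moreover have "(\<Sum>n\<le>m. saalschuetz_term \<alpha> \<beta> k m n) =
      pochhammer (1 + \<alpha> + of_nat k) m * pochhammer (1 + \<beta> + of_nat k) m /
      (pochhammer (1 + of_nat k) m * pochhammer (1 + \<alpha> + \<beta> + of_nat k) m)"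
    using assms(2,4) by (intro sum_saalschuetz_term) auto
  ultimately show ?thesis
    by (simp add: gamma_kernel_def)
qed

end
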